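(* Let $p,q$ be relatively prime non-zero integers with $q>0$, let $\mu>0$ be an integer, and write $(2\mu-1)q=np+r$ and $(\mu-1)q=kp+t$ with $n,k\in\mathbb Z$ and $r,t\in\{0,\dots,|p|-1\}$. If $r>0$ then $$\sum_{|s|<\mu}\varphi_{[i]}(s)=\begin{cases}\left\lfloor\frac{(2\mu-1)q}{|p|}\right\rfloor+1 & \text{if } i\equiv p-t+j\pmod p\text{ for some } j\in\{0,\dots,r-1\},\\ \left\lfloor\frac{(2\mu-1)q}{|p|}\right\rfloor & \text{otherwise.}\end{cases}$$ If $r=0$ then $\sum_{|s|<\mu}\varphi_{[i]}(s)=\left\lfloor\frac{(2\mu-1)q}{|p|}\right\rfloor$ for all $[i]\in\mathbb Z/p\mathbb Z$.
   Context: For relatively prime non-zero integers $p,q$ and $i\in\mathbb Z$, $\varphi_{[i]}(s)$ denotes the cardinality of $\{n\in\mathbb Z:\lfloor\frac{i+pn}{q}\rfloor=s\}$; it depends only on the class $[i]$ of $i$ mod $p$. *)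

theory Defs
  imports Complex_Main "HOL-Number_Theory.Cong"
begin

definition phi :: "int \<Rightarrow> int \<Rightarrow> int \<Rightarrow> int \<Rightarrow> nat" where
  "phi p q i s = card {n::int. \<lfloor>real_of_int (i + p * n) / real_of_int q\<rfloor> = s}"

end

theory Submission imports Defs begin

text \<open>
  The integers n with \<open>\<lfloor>(i + p n)/q\<rfloor> = s\<close> are exactly those with \<open>i + p n\<close> in the window
  \<open>[s q, s q + q)\<close>, so the sum over \<open>|s| < \<mu>\<close> counts the terms of the progression
  \<open>i + p\<int>\<close> in the single interval \<open>[a, a + (2\<mu>-1) q)\<close> with \<open>a = -(\<mu>-1) q\<close>.
  Every block of \<open>|p|\<close> consecutive integers contains exactly one such term, and the
  remaining \<open>r\<close> integers \<open>a, \<dots>, a + r - 1\<close> contain one iff \<open>i \<equiv> a + j\<close> for some \<open>j < r\<close>;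
  finally \<open>a \<equiv> p - t (mod p)\<close>.
\<close>

definition ap_indices :: "int \<Rightarrow> int \<Rightarrow> int \<Rightarrow> int \<Rightarrow> int set" where
  "ap_indices p i a b = {n. a \<le> i + p * n \<and> i + p * n < b}"

lemma finite_ap_indices:
  assumes "p \<noteq> 0"
  shows "finite (ap_indices p i a b)"
proof -
  have "ap_indices p i a b \<subseteq> {-(\<bar>a\<bar> + \<bar>b\<bar> + \<bar>i\<bar>)..\<bar>a\<bar> + \<bar>b\<bar> + \<bar>i\<bar>}"
  proof
    fix n assume "n \<in> ap_indices p i a b"
    then have "\<bar>p * n\<bar> \<le> \<bar>a\<bar> + \<bar>b\<bar> + \<bar>i\<bar>" by (auto simp: ap_indices_def)
    moreover have "1 \<le> \<bar>p\<bar>" using assms by linarith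
    then have "\<bar>n\<bar> \<le> \<bar>p * n\<bar>"
      by (simp add: abs_mult mult_le_cancel_right1)
    ultimately show "n \<in> {-(\<bar>a\<bar> + \<bar>b\<bar> + \<bar>i\<bar>)..\<bar>a\<bar> + \<bar>b\<bar> + \<bar>i\<bar>}" by auto
  qed
  then show ?thesis by (rule finite_subset) simp
qed

lemma ap_indices_uminus: "ap_indices (-p) i a b = uminus ` ap_indices p i a b"
proof (rule set_eqI)
  fix n
  have "n \<in> uminus ` ap_indices p i a b \<longleftrightarrow> -n \<in> ap_indices p i a b" by force
  then show "n \<in> ap_indices (-p) i a b \<longleftrightarrow> n \<in> uminus ` ap_indices p i a b"
    by (simp add: ap_indices_def)
qed

lemma card_ap_indices_abs: "card (ap_indices \<bar>p\<bar> i a b) = card (ap_indices p i a b)"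
proof (cases "p \<ge> 0")
  case False
  then have "ap_indices \<bar>p\<bar> i a b = uminus ` ap_indices p i a b"
    using ap_indices_uminus[of p] by simp
  then show ?thesis by (simp add: card_image)
qed (simp add: abs_of_nonneg)

lemma card_ap_indices_split:
  assumes "p \<noteq> 0" "a \<le> b" "b \<le> c"
  shows "card (ap_indices p i a c) = card (ap_indices p i a b) + card (ap_indices p i b c)"
proof -
  have "ap_indices p i a c = ap_indices p i a b \<union> ap_indices p i b c"
    using assms(2,3) by (auto simp: ap_indices_def)
  moreover have "ap_indices p i a b \<inter> ap_indices p i b c = {}" by (auto simp: ap_indices_def)
  ultimately show ?thesis using finite_ap_indices[OF assms(1)] by (simp add: card_Un_disjoint)
qed

lemma ap_indices_window_unique:
  assumes "p > 0" "m \<in> ap_indices p i a (a + p)" "n \<in> ap_indices p i a (a + p)"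
  shows "m = n"
proof (rule ccontr)
  assume "m \<noteq> n"
  then have "p \<le> \<bar>p * (m - n)\<bar>"
    using assms(1) by (simp add: abs_mult mult_le_cancel_left1)
  then show False using assms(2,3) by (auto simp: ap_indices_def algebra_simps)
qed

lemma card_ap_indices_short:
  assumes "p > 0" "0 \<le> r" "r \<le> p"
  shows "card (ap_indices p i a (a + r)) = of_bool (\<exists>j\<in>{0..<r}. [i = a + j] (mod p))"
proof (cases "\<exists>j\<in>{0..<r}. [i = a + j] (mod p)")
  case True
  then obtain j m where "j \<in> {0..<r}" "a + j = i + p * m"
    unfolding cong_iff_lin by blast
  then have m: "m \<in> ap_indices p i a (a + r)" by (simp add: ap_indices_def)
  have "ap_indices p i a (a + r) \<subseteq> ap_indices p i a (a + p)"
    using assms by (auto simp: ap_indices_def)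
  with m have "ap_indices p i a (a + r) = {m}"
    using ap_indices_window_unique[OF assms(1)] by blast
  then show ?thesis using True by simp
next
  case False
  have "ap_indices p i a (a + r) = {}"
  proof safe
    fix n assume "n \<in> ap_indices p i a (a + r)"
    then have "i + p * n - a \<in> {0..<r}" by (simp add: ap_indices_def)
    moreover have "[i = a + (i + p * n - a)] (mod p)" by (simp add: cong_iff_lin)
    ultimately show "n \<in> {}" using False by blast
  qed
  then show ?thesis using False by simp
qed

lemma card_ap_indices_window:
  assumes "p > 0"
  shows "card (ap_indices p i a (a + p)) = 1"
proof -
  have "[i = a + (i - a) mod p] (mod p)" by (simp add: cong_def mod_add_right_eq)
  moreover have "(i - a) mod p \<in> {0..<p}" using assms by simp
  ultimately show ?thesis
    using card_ap_indices_short[of p p i a] assms by auto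
qed

lemma card_ap_indices_blocks:
  assumes "p > 0" "0 \<le> r" "r < p"
  shows "card (ap_indices p i a (a + int N * p + r))
           = N + of_bool (\<exists>j\<in>{0..<r}. [i = a + j] (mod p))"
proof (induction N arbitrary: a)
  case 0
  then show ?case using card_ap_indices_short assms by simp
next
  case (Suc N)
  have end_eq: "a + int (Suc N) * p + r = (a + p) + int N * p + r" by (simp add: algebra_simps)
  have "0 \<le> int N * p" using assms(1) by simp
  then have "a \<le> a + p" "a + p \<le> (a + p) + int N * p + r" using assms by auto
  moreover have "p \<noteq> 0" using assms(1) by simp
  ultimately have split: "card (ap_indices p i a ((a + p) + int N * p + r))
      = card (ap_indices p i a (a + p)) + card (ap_indices p i (a + p) ((a + p) + int N * p + r))"
    by (simp add: card_ap_indices_split)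
  have shift: "[i = a + p + j] (mod p) \<longleftrightarrow> [i = a + j] (mod p)" for j
    unfolding cong_def by (metis add.assoc add.commute mod_add_self2)
  show ?case
    unfolding end_eq split using card_ap_indices_window[OF assms(1)]
      Suc.IH[of "a + p"] shift by simp
qed

lemma card_ap_indices:
  assumes "p \<noteq> 0" "0 \<le> L"
  shows "card (ap_indices p i a (a + L))
           = nat (L div \<bar>p\<bar>) + of_bool (\<exists>j\<in>{0..<L mod \<bar>p\<bar>}. [i = a + j] (mod p))"
proof -
  have "a + L = a + int (nat (L div \<bar>p\<bar>)) * \<bar>p\<bar> + L mod \<bar>p\<bar>"
    using assms by (simp add: pos_imp_zdiv_nonneg_iff algebra_simps)
  then have "card (ap_indices \<bar>p\<bar> i a (a + L))
               = nat (L div \<bar>p\<bar>) + of_bool (\<exists>j\<in>{0..<L mod \<bar>p\<bar>}. [i = a + j] (mod \<bar>p\<bar>))"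
    using card_ap_indices_blocks[of "\<bar>p\<bar>" "L mod \<bar>p\<bar>" i a "nat (L div \<bar>p\<bar>)"] assms(1)
    by (simp only:) simp
  then show ?thesis by (simp add: card_ap_indices_abs cong_abs)
qed

lemma floor_of_int_divide_eq_iff:
  fixes q x s :: int
  assumes "q > 0"
  shows "\<lfloor>real_of_int x / real_of_int q\<rfloor> = s \<longleftrightarrow> s * q \<le> x \<and> x < s * q + q"
proof -
  have "\<lfloor>real_of_int x / real_of_int q\<rfloor> = s \<longleftrightarrow>
          real_of_int (s * q) \<le> real_of_int x \<and> real_of_int x < real_of_int (s * q + q)"
    using assms by (simp add: floor_eq_iff pos_le_divide_eq pos_divide_less_eq algebra_simps)
  then show ?thesis by linarith
qed

lemma phi_eq_card_ap_indices:
  assumes "q > 0"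
  shows "phi p q i s = card (ap_indices p i (s * q) (s * q + q))"
  unfolding phi_def ap_indices_def floor_of_int_divide_eq_iff[OF assms] ..

lemma sum_phi_eq_card_ap_indices:
  assumes "p \<noteq> 0" "q > 0"
  shows "(\<Sum>s\<in>{l..<l + int m}. phi p q i s) = card (ap_indices p i (l * q) ((l + int m) * q))"
proof (induction m)
  case 0
  have "ap_indices p i (l * q) (l * q) = {}" by (auto simp: ap_indices_def)
  then show ?case by simp
next
  case (Suc m)
  have "l * q \<le> (l + int m) * q" "(l + int m) * q \<le> (l + int (Suc m)) * q"
    using assms by (simp_all add: mult_right_mono)
  note split = card_ap_indices_split[OF assms(1) this]
  have "{l..<l + int (Suc m)} = insert (l + int m) {l..<l + int m}" by auto
  then have "(\<Sum>s\<in>{l..<l + int (Suc m)}. phi p q i s)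
               = card (ap_indices p i (l * q) ((l + int m) * q)) + phi p q i (l + int m)"
    using Suc.IH by simp
  also have "phi p q i (l + int m) = card (ap_indices p i ((l + int m) * q) ((l + int (Suc m)) * q))"
    using phi_eq_card_ap_indices[OF assms(2)] by (simp add: algebra_simps)
  finally show ?case unfolding split .
qed

theorem lemma3p1:
  fixes p q \<mu> n k r t i :: int
  assumes "coprime p q" and "p \<noteq> 0" and "q > 0" and "\<mu> > 0"
    and "(2*\<mu> - 1) * q = n * p + r" and "0 \<le> r" and "r \<le> \<bar>p\<bar> - 1"
    and "(\<mu> - 1) * q = k * p + t" and "0 \<le> t" and "t \<le> \<bar>p\<bar> - 1"
  shows "(r > 0 \<longrightarrow>
            int (\<Sum>s\<in>{s::int. \<bar>s\<bar> < \<mu>}. phi p q i s) =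
              (if \<exists>j\<in>{0..r-1}. [i = p - t + j] (mod p)
               then \<lfloor>real_of_int ((2*\<mu> - 1) * q) / real_of_int \<bar>p\<bar>\<rfloor> + 1
               else \<lfloor>real_of_int ((2*\<mu> - 1) * q) / real_of_int \<bar>p\<bar>\<rfloor>))
       \<and> (r = 0 \<longrightarrow>
            int (\<Sum>s\<in>{s::int. \<bar>s\<bar> < \<mu>}. phi p q i s) =
              \<lfloor>real_of_int ((2*\<mu> - 1) * q) / real_of_int \<bar>p\<bar>\<rfloor>)"
proof -
  define L where "L = (2 * \<mu> - 1) * q"
  define a where "a = -(\<mu> - 1) * q"
  have "L > 0" using assms(3,4) by (simp add: L_def)
  have L_mod: "L mod \<bar>p\<bar> = r"
  proof -
    have "L = (if p > 0 then n else -n) * \<bar>p\<bar> + r" using assms(5) by (simp add: L_def)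
    then show ?thesis using assms(6,7) by simp
  qed
  have shift: "[i = a + j] (mod p) \<longleftrightarrow> [i = p - t + j] (mod p)" for j
  proof -
    have "[a + j = p - t + j] (mod p)"
      unfolding cong_iff_lin using assms(8) by (intro exI[of _ "k + 1"]) (simp add: a_def algebra_simps)
    then show ?thesis by (meson cong_sym cong_trans)
  qed
  have "(\<Sum>s\<in>{s. \<bar>s\<bar> < \<mu>}. phi p q i s) = (\<Sum>s\<in>{-(\<mu> - 1)..<-(\<mu> - 1) + int (nat (2 * \<mu> - 1))}. phi p q i s)"
    using assms(4) by (intro sum.cong) auto
  also have "\<dots> = card (ap_indices p i a (a + L))"
    unfolding sum_phi_eq_card_ap_indices[OF assms(2,3)] using assms(4)
    by (simp add: a_def L_def algebra_simps)
  also have "\<dots> = nat (L div \<bar>p\<bar>) + of_bool (\<exists>j\<in>{0..<r}. [i = p - t + j] (mod p))"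
    using card_ap_indices[OF assms(2)] \<open>L > 0\<close> L_mod shift by simp
  finally have "int (\<Sum>s\<in>{s. \<bar>s\<bar> < \<mu>}. phi p q i s)
                  = L div \<bar>p\<bar> + of_bool (\<exists>j\<in>{0..<r}. [i = p - t + j] (mod p))"
    using \<open>L > 0\<close> assms(2) by (simp add: pos_imp_zdiv_nonneg_iff)
  moreover have "\<lfloor>real_of_int L / real_of_int \<bar>p\<bar>\<rfloor> = L div \<bar>p\<bar>"
    by (rule floor_divide_of_int_eq)
  moreover have "{0..<r} = {0..r - 1}" by auto
  ultimately show ?thesis by (auto simp: L_def)
qed

end
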